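(* Let $\bm{\mu}\in\mathbb{R}^d$, let $\bm{\Sigma}$ be a positive definite $d\times d$ matrix, let $t\in\mathbb{R}$ and $\bm{w}\in\mathbb{R}^d$ with $\bm{w}\ne\bm{0}$. Let $\mathcal{M}_S(\bm{\mu},\bm{\Sigma})$ be the set of symmetric probability distributions $G$ on $\mathbb{R}^d$ of a random vector $\bm{X}$ with $\mathbb{E}^G[\bm{X}]=\bm{\mu}$ and $\mathrm{Cov}^G[\bm{X}]=\bm{\Sigma}$, and let $\mathcal{L}_{\bm{w},S}(\bm{\mu},\bm{\Sigma})$ be the set of distributions of $\bm{w}^\top\bm{X}$ as the distribution of $\bm{X}$ ranges over $\mathcal{M}_S(\bm{\mu},\bm{\Sigma})$. Then \[ \mathcal{L}_{\bm{w},S}(\bm{\mu},\bm{\Sigma})=\mathcal{L}_S\big(\bm{w}^\top\bm{\mu},\sqrt{\bm{w}^\top\bm{\Sigma}\bm{w}}\big) \] and \[ \sup_{G\in\mathcal{M}_S(\bm{\mu},\bm{\Sigma})}\mathbb{E}^G[(\bm{w}^\top\bm{X}-t)_+^2]=\sup_{F\in\mathcal{L}_S(\bm{w}^\top\bm{\mu},\sqrt{\bm{w}^\top\bm{\Sigma}\bm{w}})}\mathbb{E}^F[(X-t)_+^2]. \]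
   Context: For $x\in\mathbb{R}$, $(x)_+=\max\{x,0\}$. For $a\in\mathbb{R}$, $s>0$, $\mathcal{L}_S(a,s)$ is the set of symmetric probability distributions $F$ on $\mathbb{R}$ with $\mathbb{E}^F[X]=a$ and $\mathbb{E}^F[X^2]=a^2+s^2$; a distribution of a real random variable $X$ is symmetric if there is $b\in\mathbb{R}$ with $\mathbb{P}(X-b>x)=\mathbb{P}(X-b<-x)$ for all $x$. A distribution $G$ of $\bm{X}\in\mathbb{R}^d$ is symmetric if there is $\bm{a}\in\mathbb{R}^d$ with $\mathbb{P}(\bm{X}-\bm{a}\in B)=\mathbb{P}(\bm{X}-\bm{a}\in -B)$ for all Borel $B\subseteq\mathbb{R}^d$, where $-B=\{\bm{x}:-\bm{x}\in B\}$. *)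

theory Defs
  imports "HOL-Probability.Probability"
begin

definition pos_part :: "real \<Rightarrow> real" where
  "pos_part x = max x 0"

definition sym_dist_real :: "real measure \<Rightarrow> bool" where
  "sym_dist_real F \<longleftrightarrow>
     (\<exists>b. \<forall>x. measure F {y. y - b > x} = measure F {y. y - b < - x})"

definition L_S :: "real \<Rightarrow> real \<Rightarrow> real measure set" where
  "L_S a s = {F. prob_space F \<and> sets F = sets (borel :: real measure) \<and> sym_dist_real F
     \<and> integrable F (\<lambda>x. x) \<and> integrable F (\<lambda>x. x ^ 2)
     \<and> (\<integral>x. x \<partial>F) = a \<and> (\<integral>x. x ^ 2 \<partial>F) = a ^ 2 + s ^ 2}"

definition sym_dist_vec :: "(real ^ 'n) measure \<Rightarrow> bool" where
  "sym_dist_vec G \<longleftrightarrow>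
     (\<exists>a. \<forall>B \<in> sets (borel :: (real ^ 'n) measure).
        measure G {x. x - a \<in> B} = measure G {x. x - a \<in> uminus ` B})"

definition pos_def_mat :: "real ^ 'n ^ 'n \<Rightarrow> bool" where
  "pos_def_mat S \<longleftrightarrow> transpose S = S \<and> (\<forall>v. v \<noteq> 0 \<longrightarrow> v \<bullet> (S *v v) > 0)"

definition M_S :: "real ^ 'n \<Rightarrow> real ^ 'n ^ 'n \<Rightarrow> (real ^ 'n) measure set" where
  "M_S mu S = {G. prob_space G \<and> sets G = sets (borel :: (real ^ 'n) measure) \<and> sym_dist_vec G
     \<and> (\<forall>i. integrable G (\<lambda>x. x $ i)) \<and> (\<forall>i. integrable G (\<lambda>x. (x $ i) ^ 2))
     \<and> (\<forall>i. (\<integral>x. x $ i \<partial>G) = mu $ i)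
     \<and> (\<forall>i j. (\<integral>x. (x $ i - mu $ i) * (x $ j - mu $ j) \<partial>G) = S $ i $ j)}"

definition L_wS :: "real ^ 'n \<Rightarrow> real ^ 'n \<Rightarrow> real ^ 'n ^ 'n \<Rightarrow> real measure set" where
  "L_wS w mu S = (\<lambda>G. distr G borel (\<lambda>x. w \<bullet> x)) ` M_S mu S"

end

theory Submission
  imports Defs
begin

text \<open>Projecting a symmetric law with mean \<open>\<mu>\<close> and covariance \<open>\<Sigma>\<close> onto \<open>w\<close> gives a
  symmetric law with mean \<open>w\<^sup>T\<mu>\<close> and variance \<open>\<sigma>\<^sup>2 = w\<^sup>T\<Sigma>w\<close>; by the change of
  variables formula the same projection turns the first supremum into one over \<open>L_wS\<close>.
  Conversely, for \<open>Y \<sim> F \<in> L_S(w\<^sup>T\<mu>, \<sigma>)\<close> put \<open>X = \<mu> + (Y - w\<^sup>T\<mu>) \<Sigma>w / \<sigma>\<^sup>2 + Z\<close>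
  with \<open>Z\<close> independent of \<open>Y\<close>, symmetric, centred, orthogonal to \<open>w\<close> and with covariance
  the Schur complement \<open>\<Sigma> - \<Sigma>ww\<^sup>T\<Sigma> / \<sigma>\<^sup>2\<close>. This complement is positive
  semidefinite and annihilates \<open>w\<close>, so it factors as \<open>\<Sum>\<^sub>k v\<^sub>k v\<^sub>k\<^sup>T\<close> with
  \<open>w\<^sup>Tv\<^sub>k = 0\<close>, and \<open>Z\<close> can be taken uniform on the \<open>2d\<close> points \<open>\<plusminus>\<surd>d v\<^sub>k\<close>.
  Then \<open>w\<^sup>TX = Y\<close>, and \<open>X\<close> is symmetric with mean \<open>\<mu>\<close> and covariance \<open>\<Sigma>\<close>.\<close>

section \<open>Positive semidefinite forms and Schur complements\<close>

definition quad_form :: "('n::finite \<Rightarrow> 'n \<Rightarrow> real) \<Rightarrow> ('n \<Rightarrow> real) \<Rightarrow> ('n \<Rightarrow> real) \<Rightarrow> real" where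
  "quad_form C x y = (\<Sum>a\<in>UNIV. \<Sum>b\<in>UNIV. x a * C a b * y b)"

definition mat_apply :: "('n::finite \<Rightarrow> 'n \<Rightarrow> real) \<Rightarrow> ('n \<Rightarrow> real) \<Rightarrow> 'n \<Rightarrow> real" where
  "mat_apply C y a = (\<Sum>b\<in>UNIV. C a b * y b)"

definition sym_psd :: "('n::finite \<Rightarrow> 'n \<Rightarrow> real) \<Rightarrow> bool" where
  "sym_psd C \<longleftrightarrow> (\<forall>i j. C i j = C j i) \<and> (\<forall>x. 0 \<le> quad_form C x x)"

definition schur_compl :: "('n::finite \<Rightarrow> 'n \<Rightarrow> real) \<Rightarrow> ('n \<Rightarrow> real) \<Rightarrow> 'n \<Rightarrow> 'n \<Rightarrow> real" where
  "schur_compl C y a b = C a b - mat_apply C y a * mat_apply C y b / quad_form C y y"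

lemma quad_form_eq_sum_mat_apply: "quad_form C x y = (\<Sum>a\<in>UNIV. x a * mat_apply C y a)"
  unfolding quad_form_def mat_apply_def by (simp add: sum_distrib_left mult.assoc)

lemma quad_form_add_scaled:
  "quad_form C (\<lambda>a. x a + t * y a) (\<lambda>a. x a + t * y a)
     = quad_form C x x + t * (quad_form C x y + quad_form C y x) + t\<^sup>2 * quad_form C y y"
  unfolding quad_form_def
  by (simp add: algebra_simps power2_eq_square sum.distrib sum_distrib_left)

lemma quad_form_commute: "(\<And>i j. C i j = C j i) \<Longrightarrow> quad_form C x y = quad_form C y x"
  unfolding quad_form_def by (subst sum.swap) (simp add: mult.commute mult.left_commute)

lemma quad_form_schur_compl:
  "quad_form (schur_compl C y) x x = quad_form C x x - (quad_form C x y)\<^sup>2 / quad_form C y y"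
proof -
  have "quad_form (schur_compl C y) x x = quad_form C x x
      - (\<Sum>a\<in>UNIV. \<Sum>b\<in>UNIV. (x a * mat_apply C y a) * (x b * mat_apply C y b) / quad_form C y y)"
    unfolding quad_form_def schur_compl_def
    by (simp add: right_diff_distrib left_diff_distrib sum_subtractf mult_ac)
  also have "(\<Sum>a\<in>UNIV. \<Sum>b\<in>UNIV. (x a * mat_apply C y a) * (x b * mat_apply C y b) / quad_form C y y)
      = (quad_form C x y)\<^sup>2 / quad_form C y y"
    by (simp only: quad_form_eq_sum_mat_apply power2_eq_square sum_product sum_divide_distrib)
  finally show ?thesis .
qed

lemma quad_form_schur_compl_self:
  "quad_form C y y \<noteq> 0 \<Longrightarrow> quad_form (schur_compl C y) y y = 0"
  by (simp add: quad_form_schur_compl power2_eq_square)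

lemma sym_psd_schur_compl:
  assumes C: "sym_psd C" and pos: "quad_form C y y > 0"
  shows "sym_psd (schur_compl C y)"
  unfolding sym_psd_def
proof (intro conjI allI)
  fix i j show "schur_compl C y i j = schur_compl C y j i"
    using C unfolding sym_psd_def schur_compl_def by (simp add: mult.commute)
next
  fix x
  define p where "p = quad_form C x y"
  define q where "q = quad_form C y y"
  \<comment> \<open>minimise the nonnegative quadratic \<open>t \<mapsto> quad_form C (x + t y) (x + t y)\<close>\<close>
  have "0 \<le> quad_form C (\<lambda>a. x a + (- p / q) * y a) (\<lambda>a. x a + (- p / q) * y a)"
    using C unfolding sym_psd_def by blast
  also have "\<dots> = quad_form C x x - p\<^sup>2 / q"
    using pos quad_form_commute[of C x y] C
    unfolding quad_form_add_scaled p_def q_def sym_psd_def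
    by (simp add: field_simps power2_eq_square)
  finally show "0 \<le> quad_form (schur_compl C y) x x"
    unfolding quad_form_schur_compl p_def q_def .
qed

definition unit_fun :: "'n \<Rightarrow> 'n \<Rightarrow> real" where
  "unit_fun i a = (if a = i then 1 else 0)"

lemma mat_apply_unit_fun: "mat_apply C (unit_fun i) a = C a i"
  unfolding mat_apply_def unit_fun_def by (simp add: if_distrib cong: if_cong)

lemma quad_form_unit_fun: "quad_form C (unit_fun i) (unit_fun j) = C i j"
  unfolding quad_form_eq_sum_mat_apply mat_apply_unit_fun unit_fun_def
  by (simp add: if_distrib[of "\<lambda>c. c * _"] cong: if_cong)

lemma sym_psd_diag_nonneg: "sym_psd C \<Longrightarrow> 0 \<le> C i i"
  unfolding sym_psd_def by (metis quad_form_unit_fun)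

lemma sym_psd_zero_diag:
  assumes C: "sym_psd C" and "C i i = 0"
  shows "C i j = 0"
proof (rule ccontr)
  assume "C i j \<noteq> 0"
  define t where "t = - (C j j + 1) / (2 * C i j)"
  have "0 \<le> quad_form C (\<lambda>a. unit_fun j a + t * unit_fun i a) (\<lambda>a. unit_fun j a + t * unit_fun i a)"
    using C unfolding sym_psd_def by blast
  also have "\<dots> = C j j + t * (2 * C i j)"
    using C \<open>C i i = 0\<close> unfolding quad_form_add_scaled quad_form_unit_fun sym_psd_def by simp
  also have "\<dots> = -1"
    using \<open>C i j \<noteq> 0\<close> unfolding t_def by simp
  finally show False by simp
qed

lemma sym_psd_factor_on:
  fixes C :: "'n::finite \<Rightarrow> 'n \<Rightarrow> real"
  assumes "finite K" and "sym_psd C" and "\<And>i j. i \<notin> K \<Longrightarrow> C i j = 0"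
  shows "\<exists>v. \<forall>i j. C i j = (\<Sum>k\<in>K. v k i * v k j)"
  using assms
proof (induction K arbitrary: C rule: finite_induct)
  case empty
  then show ?case by simp
next
  case (insert i K)
  have symC: "C a b = C b a" for a b
    using insert.prems(1) unfolding sym_psd_def by blast
  consider "C i i = 0" | "C i i > 0"
    using sym_psd_diag_nonneg[OF insert.prems(1), of i] by linarith
  then show ?case
  proof cases
    case 1
    then have "C i j = 0" for j
      using sym_psd_zero_diag[OF insert.prems(1)] by blast
    then have "C a b = 0" if "a \<notin> K" for a b
      using that insert.prems(2) by (cases "a = i") auto
    then obtain v where v: "\<forall>a b. C a b = (\<Sum>k\<in>K. v k a * v k b)"
      using insert.IH[OF insert.prems(1)] insert.prems(2) by blast
    have "C a b = (\<Sum>k\<in>insert i K. (v(i := \<lambda>_. 0)) k a * (v(i := \<lambda>_. 0)) k b)" for a b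
      using insert.hyps v by (auto intro!: sum.cong)
    then show ?thesis by blast
  next
    case 2
    let ?C' = "schur_compl C (unit_fun i)"
    have C': "?C' a b = C a b - C a i * C b i / C i i" for a b
      unfolding schur_compl_def mat_apply_unit_fun quad_form_unit_fun ..
    have "?C' a b = 0" if "a \<notin> K" for a b
    proof (cases "a = i")
      case True
      then show ?thesis using 2 by (simp add: C' symC[of b i])
    next
      case False
      then show ?thesis using that insert.prems(2) by (simp add: C')
    qed
    moreover have "sym_psd ?C'"
      using sym_psd_schur_compl[OF insert.prems(1)] 2 by (simp add: quad_form_unit_fun)
    ultimately obtain v where v: "\<forall>a b. ?C' a b = (\<Sum>k\<in>K. v k a * v k b)"
      using insert.IH by blast
    define v' where "v' = v(i := (\<lambda>a. C a i / sqrt (C i i)))"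
    have "C a b = v' i a * v' i b + (\<Sum>k\<in>K. v' k a * v' k b)" for a b
    proof -
      have "v' i a * v' i b = C a i * C b i / C i i"
        unfolding v'_def using 2 by (simp add: field_simps real_sqrt_mult[symmetric])
      moreover have "(\<Sum>k\<in>K. v' k a * v' k b) = ?C' a b"
        using insert.hyps v unfolding v'_def by (auto intro!: sum.cong)
      ultimately show ?thesis by (simp add: C')
    qed
    then show ?thesis using insert.hyps by auto
  qed
qed

lemma sym_psd_factor:
  fixes C :: "'n::finite \<Rightarrow> 'n \<Rightarrow> real"
  assumes "sym_psd C"
  shows "\<exists>v :: 'n \<Rightarrow> 'n \<Rightarrow> real. \<forall>i j. C i j = (\<Sum>k\<in>UNIV. v k i * v k j)"
  using sym_psd_factor_on[of UNIV C] assms by simp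

lemma quad_form_gram:
  fixes v :: "'k::finite \<Rightarrow> 'n::finite \<Rightarrow> real"
  shows "quad_form (\<lambda>i j. \<Sum>k\<in>UNIV. v k i * v k j) x x = (\<Sum>k\<in>UNIV. (\<Sum>a\<in>UNIV. x a * v k a)\<^sup>2)"
proof -
  have "quad_form (\<lambda>i j. \<Sum>k\<in>UNIV. v k i * v k j) x x
      = (\<Sum>a\<in>UNIV. \<Sum>b\<in>UNIV. \<Sum>k\<in>UNIV. x a * v k a * (x b * v k b))"
    unfolding quad_form_def by (simp add: sum_distrib_left sum_distrib_right mult_ac)
  also have "\<dots> = (\<Sum>k\<in>UNIV. \<Sum>a\<in>UNIV. \<Sum>b\<in>UNIV. x a * v k a * (x b * v k b))"
    by (subst sum.swap, rule sum.cong[OF refl], rule sum.swap)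
  also have "\<dots> = (\<Sum>k\<in>UNIV. (\<Sum>a\<in>UNIV. x a * v k a)\<^sup>2)"
    by (simp only: power2_eq_square sum_product)
  finally show ?thesis .
qed

lemma schur_compl_factor_orthogonal:
  fixes C :: "'n::finite \<Rightarrow> 'n \<Rightarrow> real"
  assumes C: "sym_psd C" and pos: "quad_form C y y > 0"
  obtains v :: "'n \<Rightarrow> 'n \<Rightarrow> real" where "\<And>i j. schur_compl C y i j = (\<Sum>k\<in>UNIV. v k i * v k j)"
    and "\<And>k. (\<Sum>a\<in>UNIV. y a * v k a) = 0"
proof -
  obtain v :: "'n \<Rightarrow> 'n \<Rightarrow> real" where v: "\<forall>i j. schur_compl C y i j = (\<Sum>k\<in>UNIV. v k i * v k j)"
    using sym_psd_factor[OF sym_psd_schur_compl[OF C pos]] by blast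
  then have "schur_compl C y = (\<lambda>i j. \<Sum>k\<in>UNIV. v k i * v k j)" by blast
  then have "(\<Sum>k\<in>UNIV. (\<Sum>a\<in>UNIV. y a * v k a)\<^sup>2) = 0"
    using quad_form_schur_compl_self[of C y] pos by (simp add: quad_form_gram[symmetric])
  then have "\<forall>k. (\<Sum>a\<in>UNIV. y a * v k a) = 0"
    by (subst (asm) sum_nonneg_eq_0_iff) auto
  with v that show ?thesis by blast
qed

lemma quad_form_vec_nth: "quad_form (\<lambda>i j. S$i$j) (($) x) (($) y) = x \<bullet> (S *v y)"
  by (simp add: quad_form_def inner_vec_def matrix_vector_mult_def sum_distrib_left mult_ac)

lemma mat_apply_vec_nth: "mat_apply (\<lambda>i j. S$i$j) (($) y) = ($) (S *v y)"
  by (simp add: mat_apply_def matrix_vector_mult_def fun_eq_iff)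

lemma sym_psd_pos_def_mat:
  assumes "pos_def_mat S"
  shows "sym_psd (\<lambda>i j. S$i$j)"
  unfolding sym_psd_def
proof (intro conjI allI)
  fix i j
  have "transpose S = S" using assms unfolding pos_def_mat_def by simp
  then show "S$i$j = S$j$i" by (metis transpose_def vec_lambda_beta)
next
  fix x
  have "0 \<le> (\<chi> i. x i) \<bullet> (S *v (\<chi> i. x i))"
    using assms unfolding pos_def_mat_def by (cases "(\<chi> i. x i) = 0") (auto intro: less_imp_le)
  moreover have "($) (\<chi> i. x i) = x" by (simp add: fun_eq_iff)
  ultimately show "0 \<le> quad_form (\<lambda>i j. S$i$j) x x"
    using quad_form_vec_nth[of S "\<chi> i. x i" "\<chi> i. x i"] by simp
qed

section \<open>Linear projections of symmetric distributions\<close>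

lemma borel_measurable_vec_nth [measurable]: "(\<lambda>x::real^'n. x $ i) \<in> borel_measurable borel"
  by (intro borel_measurable_continuous_onI linear_continuous_on bounded_linear_vec_nth)

lemma inner_vec_sum: "(w::real^'n) \<bullet> x = (\<Sum>i\<in>UNIV. w$i * x$i)"
  by (simp add: inner_vec_def)

lemma inner_matrix_vector_mult_sum:
  "(w::real^'n) \<bullet> (S *v w) = (\<Sum>i\<in>UNIV. \<Sum>j\<in>UNIV. w$i * w$j * S$i$j)"
  by (simp add: inner_vec_def matrix_vector_mult_def sum_distrib_left mult_ac)

lemma M_S_second_moment:
  fixes mu :: "real^'n" and S :: "real^'n^'n"
  assumes G: "G \<in> M_S mu S"
  shows "integrable G (\<lambda>x. x$i * x$j)" and "(\<integral>x. x$i * x$j \<partial>G) = S$i$j + mu$i * mu$j"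
proof -
  have sG: "sets G = sets borel"
    and int1: "\<And>i. integrable G (\<lambda>x. x $ i)" and int2: "\<And>i. integrable G (\<lambda>x. (x $ i)\<^sup>2)"
    and mean: "\<And>i. (\<integral>x. x $ i \<partial>G) = mu $ i"
    and cov: "\<And>i j. (\<integral>x. (x $ i - mu $ i) * (x $ j - mu $ j) \<partial>G) = S $ i $ j"
    and "prob_space G"
    using G unfolding M_S_def by auto
  note [measurable_cong] = sG
  interpret prob_space G by fact
  have bound: "norm (x$i * x$j) \<le> norm ((x$i)\<^sup>2 + (x$j)\<^sup>2)" for x :: "real^'n"
  proof -
    have "2 * \<bar>x$i\<bar> * \<bar>x$j\<bar> \<le> (x$i)\<^sup>2 + (x$j)\<^sup>2"
      using sum_squares_bound[of "\<bar>x$i\<bar>" "\<bar>x$j\<bar>"] by (simp only: power2_abs)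
    moreover have "0 \<le> \<bar>x$i\<bar> * \<bar>x$j\<bar>" by simp
    ultimately have "\<bar>x$i\<bar> * \<bar>x$j\<bar> \<le> (x$i)\<^sup>2 + (x$j)\<^sup>2" by linarith
    then show ?thesis by (simp add: abs_mult)
  qed
  have "integrable G (\<lambda>x. (x$i)\<^sup>2 + (x$j)\<^sup>2)"
    using int2[of i] int2[of j] by (rule Bochner_Integration.integrable_add)
  moreover have "(\<lambda>x. x$i * x$j) \<in> borel_measurable G" by measurable
  ultimately show prod: "integrable G (\<lambda>x. x$i * x$j)"
    using bound by (rule Bochner_Integration.integrable_bound[OF _ _ AE_I2])
  have "S$i$j = (\<integral>x. x$i * x$j - mu$i * x$j - mu$j * x$i + mu$i * mu$j \<partial>G)"
    unfolding cov[symmetric] by (rule Bochner_Integration.integral_cong) (simp_all add: algebra_simps)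
  also have "\<dots> = (\<integral>x. x$i * x$j \<partial>G) - mu$i * mu$j"
    using prod int1 mean by (simp add: prob_space)
  finally show "(\<integral>x. x$i * x$j \<partial>G) = S$i$j + mu$i * mu$j" by simp
qed

lemma sym_dist_real_distr_inner:
  fixes G :: "(real^'n) measure"
  assumes sG: "sets G = sets borel" and sym: "sym_dist_vec G"
  shows "sym_dist_real (distr G borel (\<lambda>x. w \<bullet> x))"
proof -
  note [measurable_cong] = sG
  have spG: "space G = UNIV" using sets_eq_imp_space_eq[OF sG] by simp
  have mw: "(\<lambda>x. w \<bullet> x) \<in> measurable G borel" by measurable
  from sym obtain c where c: "\<And>B. B \<in> sets (borel :: (real ^ 'n) measure) \<Longrightarrow>
      measure G {x. x - c \<in> B} = measure G {x. x - c \<in> uminus ` B}"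
    unfolding sym_dist_vec_def by blast
  show ?thesis unfolding sym_dist_real_def
  proof (intro exI[of _ "w \<bullet> c"] allI)
    fix r
    let ?B = "{v::real^'n. w \<bullet> v > r}"
    have "?B \<in> sets borel" by measurable
    have reflect: "uminus ` ?B = {v. w \<bullet> v < - r}"
      by (force simp: inner_minus_right intro: image_eqI[where x = "- _"])
    have "measure (distr G borel (\<lambda>x. w \<bullet> x)) {y. y - w \<bullet> c > r} = measure G {x. x - c \<in> ?B}"
      by (subst measure_distr[OF mw]) (auto simp: spG inner_diff_right)
    also have "\<dots> = measure G {x. x - c \<in> uminus ` ?B}" by (rule c) fact
    also have "\<dots> = measure (distr G borel (\<lambda>x. w \<bullet> x)) {y. y - w \<bullet> c < - r}"
      unfolding reflect by (subst measure_distr[OF mw]) (auto simp: spG inner_diff_right)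
    finally show "measure (distr G borel (\<lambda>x. w \<bullet> x)) {y. y - w \<bullet> c > r}
        = measure (distr G borel (\<lambda>x. w \<bullet> x)) {y. y - w \<bullet> c < - r}" .
  qed
qed

lemma L_wS_subset_L_S:
  fixes mu w :: "real^'n" and S :: "real^'n^'n"
  assumes nonneg: "0 \<le> w \<bullet> (S *v w)"
  shows "L_wS w mu S \<subseteq> L_S (w \<bullet> mu) (sqrt (w \<bullet> (S *v w)))"
  unfolding L_wS_def
proof (rule image_subsetI)
  fix G assume G: "G \<in> M_S mu S"
  have "prob_space G" and sG: "sets G = sets borel" and sym: "sym_dist_vec G"
    and int1: "\<And>i. integrable G (\<lambda>x. x $ i)" and mean: "\<And>i. (\<integral>x. x $ i \<partial>G) = mu $ i"
    using G unfolding M_S_def by auto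
  note [measurable_cong] = sG
  interpret prob_space G by fact
  have mw: "(\<lambda>x. w \<bullet> x) \<in> measurable G borel" by measurable
  have lin: "(\<lambda>x. w \<bullet> x) = (\<lambda>x. \<Sum>i\<in>UNIV. w$i * x$i)"
    by (simp add: inner_vec_sum)
  have sq: "(\<lambda>x. (w \<bullet> x)\<^sup>2) = (\<lambda>x. \<Sum>i\<in>UNIV. \<Sum>j\<in>UNIV. w$i * w$j * (x$i * x$j))"
    by (simp add: inner_vec_sum power2_eq_square sum_product mult_ac)
  have int_lin: "integrable G (\<lambda>x. w \<bullet> x)"
    unfolding lin using int1 by auto
  have int_sq: "integrable G (\<lambda>x. (w \<bullet> x)\<^sup>2)"
    unfolding sq using M_S_second_moment(1)[OF G] by auto
  have first: "(\<integral>x. w \<bullet> x \<partial>G) = w \<bullet> mu"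
    unfolding lin using int1 mean by (simp add: inner_vec_sum)
  have "(\<integral>x. (w \<bullet> x)\<^sup>2 \<partial>G) = (\<Sum>i\<in>UNIV. \<Sum>j\<in>UNIV. w$i * w$j * (S$i$j + mu$i * mu$j))"
    unfolding sq using M_S_second_moment[OF G] by simp
  also have "\<dots> = (w \<bullet> mu)\<^sup>2 + w \<bullet> (S *v w)"
    unfolding inner_matrix_vector_mult_sum
    by (simp add: inner_vec_sum power2_eq_square sum_product algebra_simps sum.distrib)
  finally have second: "(\<integral>x. (w \<bullet> x)\<^sup>2 \<partial>G) = (w \<bullet> mu)\<^sup>2 + (sqrt (w \<bullet> (S *v w)))\<^sup>2"
    using nonneg by simp
  show "distr G borel (\<lambda>x. w \<bullet> x) \<in> L_S (w \<bullet> mu) (sqrt (w \<bullet> (S *v w)))"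
    unfolding L_S_def
  proof (intro CollectI conjI)
    show "prob_space (distr G borel (\<lambda>x. w \<bullet> x))" by (rule prob_space_distr[OF mw])
    show "integrable (distr G borel (\<lambda>x. w \<bullet> x)) (\<lambda>x. x)"
      using int_lin by (subst integrable_distr_eq[OF mw]) auto
    show "integrable (distr G borel (\<lambda>x. w \<bullet> x)) (\<lambda>x. x\<^sup>2)"
      using int_sq by (subst integrable_distr_eq[OF mw]) auto
    show "(\<integral>x. x \<partial>distr G borel (\<lambda>x. w \<bullet> x)) = w \<bullet> mu"
      using first by (subst integral_distr[OF mw]) auto
    show "(\<integral>x. x\<^sup>2 \<partial>distr G borel (\<lambda>x. w \<bullet> x)) = (w \<bullet> mu)\<^sup>2 + (sqrt (w \<bullet> (S *v w)))\<^sup>2"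
      using second by (subst integral_distr[OF mw]) auto
    show "sym_dist_real (distr G borel (\<lambda>x. w \<bullet> x))"
      by (rule sym_dist_real_distr_inner[OF sG sym])
  qed simp
qed

section \<open>Symmetric mixtures along a line\<close>

lemma sym_dist_real_reflect:
  fixes F :: "real measure"
  assumes "prob_space F" and sF: "sets F = sets borel"
    and sym: "\<And>x. measure F {y. y - b > x} = measure F {y. y - b < - x}"
  shows "distr F borel (\<lambda>y. 2 * b - y) = F"
proof -
  interpret prob_space F by fact
  note [measurable_cong] = sF
  have spF: "space F = UNIV" using sets_eq_imp_space_eq[OF sF] by simp
  have mr: "(\<lambda>y. 2 * b - y) \<in> measurable F borel" by measurable
  have "real_distribution (distr F borel (\<lambda>y. 2 * b - y))" and "real_distribution F"
    unfolding real_distribution_def real_distribution_axioms_def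
    using prob_space_distr[OF mr] sF prob_space_axioms by simp_all
  then show ?thesis
  proof (rule cdf_unique, intro ext)
    fix x
    have "cdf (distr F borel (\<lambda>y. 2 * b - y)) x = measure F {y. y - b \<ge> b - x}"
      unfolding cdf_def2 by (subst measure_distr[OF mr]) (auto simp: spF intro!: arg_cong[where f="measure F"])
    also have "\<dots> = 1 - measure F {y. y - b < b - x}"
      using prob_compl[of "{y. y - b < b - x}"] by (simp add: sF spF set_diff_eq not_less)
    also have "measure F {y. y - b < b - x} = measure F {y. y - b > x - b}"
      using sym[of "x - b"] by simp
    also have "1 - \<dots> = measure F {..x}"
      using prob_compl[of "{..x}"] by (simp add: sF spF set_diff_eq not_le)
    finally show "cdf (distr F borel (\<lambda>y. 2 * b - y)) x = cdf F x" unfolding cdf_def2 .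
  qed
qed

abbreviation uniform_finite :: "'q::finite measure" where
  "uniform_finite \<equiv> measure_pmf (pmf_of_set UNIV)"

lemma measurable_uniform_pair:
  fixes g :: "'q::finite \<times> 'a \<Rightarrow> 'b"
  assumes "\<And>q. (\<lambda>y. g (q, y)) \<in> measurable F M"
  shows "g \<in> measurable (uniform_finite \<Otimes>\<^sub>M F) M"
proof -
  have "g \<in> measurable (count_space UNIV \<Otimes>\<^sub>M F) M"
    by (rule measurable_pair_measure_countable1) (use assms in auto)
  moreover have "sets (uniform_finite \<Otimes>\<^sub>M F) = sets (count_space UNIV \<Otimes>\<^sub>M F)"
    by (rule sets_pair_measure_cong) auto
  ultimately show ?thesis by (simp cong: measurable_cong_sets)
qed

lemma integral_uniform_pair:
  fixes F :: "'a measure" and f :: "'q::finite \<times> 'a \<Rightarrow> real"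
  assumes "prob_space F" and f: "\<And>q. integrable F (\<lambda>y. f (q, y))"
  shows "integrable (uniform_finite \<Otimes>\<^sub>M F) f"
    and "integral\<^sup>L (uniform_finite \<Otimes>\<^sub>M F) f = (\<Sum>q\<in>UNIV. \<integral>y. f (q, y) \<partial>F) / CARD('q)"
proof -
  interpret F: prob_space F by fact
  interpret pair_prob_space uniform_finite F
    by (simp add: pair_prob_space_def pair_sigma_finite_def F.prob_space_axioms
        prob_space_measure_pmf prob_space_imp_sigma_finite)
  have "f \<in> borel_measurable (uniform_finite \<Otimes>\<^sub>M F)"
    using f by (intro measurable_uniform_pair) auto
  then show int: "integrable (uniform_finite \<Otimes>\<^sub>M F) f"
    by (rule Fubini_integrable) (auto intro!: integrable_measure_pmf_finite f)
  have "integral\<^sup>L (uniform_finite \<Otimes>\<^sub>M F) f = (\<integral>q. (\<integral>y. f (q, y) \<partial>F) \<partial>uniform_finite)"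
    using integral_fst'[OF int] by simp
  also have "\<dots> = (\<Sum>q\<in>UNIV. \<integral>y. f (q, y) \<partial>F) / CARD('q)"
    by (subst integral_pmf_of_set) auto
  finally show "integral\<^sup>L (uniform_finite \<Otimes>\<^sub>M F) f = (\<Sum>q\<in>UNIV. \<integral>y. f (q, y) \<partial>F) / CARD('q)" .
qed

lemma distr_snd_pair_prob_space:
  assumes "prob_space N" and "sigma_finite_measure M"
  shows "distr (N \<Otimes>\<^sub>M M) M snd = M"
proof (rule measure_eqI)
  interpret N: prob_space N by fact
  interpret M: sigma_finite_measure M by fact
  fix A assume "A \<in> sets (distr (N \<Otimes>\<^sub>M M) M snd)"
  then have A: "A \<in> sets M" by simp
  have "emeasure (distr (N \<Otimes>\<^sub>M M) M snd) A = emeasure (N \<Otimes>\<^sub>M M) (space N \<times> A)"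
  proof -
    have "snd -` A \<inter> space (N \<Otimes>\<^sub>M M) = space N \<times> A"
      using sets.sets_into_space[OF A] by (auto simp: space_pair_measure)
    then show ?thesis using A by (subst emeasure_distr) auto
  qed
  also have "\<dots> = emeasure M A"
    using A by (simp add: M.emeasure_pair_measure_Times N.emeasure_space_1)
  finally show "emeasure (distr (N \<Otimes>\<^sub>M M) M snd) A = emeasure M A" .
qed simp

lemma sum_UNIV_prod_bool:
  "(\<Sum>q\<in>(UNIV :: ('k::finite \<times> bool) set). g q) = (\<Sum>k\<in>UNIV. g (k, True) + g (k, False))"
proof -
  have "(\<Sum>q\<in>(UNIV :: ('k \<times> bool) set). g q) = (\<Sum>k\<in>UNIV. \<Sum>s\<in>UNIV. g (k, s))"
    by (simp add: sum.cartesian_product split_beta)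
  then show ?thesis by (simp add: UNIV_bool add.commute)
qed

text \<open>The law of \<open>c + Y u + \<epsilon> z\<^sub>K\<close>, where \<open>Y\<close> has law \<open>F\<close>, \<open>K\<close> is uniform on \<open>'k\<close>
  and the sign \<open>\<epsilon>\<close> is a fair coin, all independent.\<close>
definition signed_mixture ::
    "real measure \<Rightarrow> real^'n \<Rightarrow> real^'n \<Rightarrow> ('k::finite \<Rightarrow> real^'n) \<Rightarrow> (real^'n) measure" where
  "signed_mixture F c u z = distr (uniform_finite \<Otimes>\<^sub>M F) borel
     (\<lambda>((k, s), y). c + y *\<^sub>R u + (if s then z k else - z k))"

lemma sets_signed_mixture [simp, measurable_cong]: "sets (signed_mixture F c u z) = sets borel"
  by (simp add: signed_mixture_def)

lemma measurable_signed_mixture_point: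
  fixes z :: "'k::finite \<Rightarrow> real^'n"
  assumes "sets F = sets borel"
  shows "(\<lambda>((k, s), y). c + y *\<^sub>R u + (if s then z k else - z k))
    \<in> measurable (uniform_finite \<Otimes>\<^sub>M F) (borel :: (real^'n) measure)"
proof (rule measurable_uniform_pair)
  fix q :: "'k \<times> bool"
  note [measurable_cong] = assms
  show "(\<lambda>y. (\<lambda>((k, s), y). c + y *\<^sub>R u + (if s then z k else - z k)) (q, y)) \<in> borel_measurable F"
    by (cases q) simp
qed

lemma prob_space_signed_mixture:
  assumes "prob_space F" and "sets F = sets borel"
  shows "prob_space (signed_mixture F c u z)"
  unfolding signed_mixture_def
  by (intro prob_space.prob_space_distr prob_space_pair assms prob_space_measure_pmf
      measurable_signed_mixture_point)

lemma integral_signed_mixture: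
  fixes h :: "real^'n \<Rightarrow> real" and z :: "'k::finite \<Rightarrow> real^'n"
  assumes "prob_space F" and sF: "sets F = sets borel" and h: "h \<in> borel_measurable borel"
    and plus: "\<And>k. integrable F (\<lambda>y. h (c + y *\<^sub>R u + z k))"
    and minus: "\<And>k. integrable F (\<lambda>y. h (c + y *\<^sub>R u - z k))"
  shows "integrable (signed_mixture F c u z) h"
    and "integral\<^sup>L (signed_mixture F c u z) h =
      (\<Sum>k\<in>UNIV. (\<integral>y. h (c + y *\<^sub>R u + z k) \<partial>F) + (\<integral>y. h (c + y *\<^sub>R u - z k) \<partial>F))
        / (2 * CARD('k))"
proof -
  let ?\<phi> = "\<lambda>((k, s), y). c + y *\<^sub>R u + (if s then z k else - z k)"
  have m\<phi>: "?\<phi> \<in> measurable (uniform_finite \<Otimes>\<^sub>M F) borel"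
    by (rule measurable_signed_mixture_point[OF sF])
  have fibres: "integrable F (\<lambda>y. h (?\<phi> (q, y)))" for q
    using plus minus by (cases q) auto
  show "integrable (signed_mixture F c u z) h"
    unfolding signed_mixture_def using integral_uniform_pair(1)[OF assms(1) fibres]
    by (subst integrable_distr_eq[OF m\<phi> h]) (simp add: comp_def)
  have "integral\<^sup>L (signed_mixture F c u z) h = (\<Sum>q\<in>UNIV. \<integral>y. h (?\<phi> (q, y)) \<partial>F) / CARD('k \<times> bool)"
    unfolding signed_mixture_def integral_distr[OF m\<phi> h]
    using integral_uniform_pair(2)[OF assms(1) fibres] by (simp add: comp_def)
  also have "(\<Sum>q\<in>UNIV. \<integral>y. h (?\<phi> (q, y)) \<partial>F)
      = (\<Sum>k\<in>UNIV. (\<integral>y. h (c + y *\<^sub>R u + z k) \<partial>F) + (\<integral>y. h (c + y *\<^sub>R u - z k) \<partial>F))"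
    unfolding sum_UNIV_prod_bool by simp
  finally show "integral\<^sup>L (signed_mixture F c u z) h =
      (\<Sum>k\<in>UNIV. (\<integral>y. h (c + y *\<^sub>R u + z k) \<partial>F) + (\<integral>y. h (c + y *\<^sub>R u - z k) \<partial>F))
        / (2 * CARD('k))"
    by simp
qed

lemma integral_centred_quadratic:
  fixes F :: "real measure"
  assumes "prob_space F" and int1: "integrable F (\<lambda>y. y)" and int2: "integrable F (\<lambda>y. y\<^sup>2)"
    and mean: "(\<integral>y. y \<partial>F) = a" and second: "(\<integral>y. y\<^sup>2 \<partial>F) = a\<^sup>2 + s2"
    and f: "\<And>y. f y = p + q * (y - a) + r * (y - a)\<^sup>2"
  shows "integrable F f" and "integral\<^sup>L F f = p + r * s2"
proof -
  interpret prob_space F by fact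
  have f_eq: "f = (\<lambda>y. (p - q * a + r * a\<^sup>2) + (q - 2 * r * a) * y + r * y\<^sup>2)"
    by (rule ext) (simp add: f power2_diff algebra_simps)
  show "integrable F f"
    unfolding f_eq using int1 int2 by simp
  have "integral\<^sup>L F f = (p - q * a + r * a\<^sup>2) + (q - 2 * r * a) * a + r * (a\<^sup>2 + s2)"
    unfolding f_eq using int1 int2 mean second by (simp add: prob_space)
  then show "integral\<^sup>L F f = p + r * s2"
    by (simp add: algebra_simps power2_eq_square)
qed

lemma signed_mixture_moments:
  fixes c u :: "real^'n" and z :: "'k::finite \<Rightarrow> real^'n"
  assumes F: "prob_space F" and sF: "sets F = sets borel"
    and int1: "integrable F (\<lambda>y. y)" and int2: "integrable F (\<lambda>y. y\<^sup>2)"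
    and mean: "(\<integral>y. y \<partial>F) = a" and second: "(\<integral>y. y\<^sup>2 \<partial>F) = a\<^sup>2 + s2"
  defines "m \<equiv> c + a *\<^sub>R u"
  shows "integrable (signed_mixture F c u z) (\<lambda>x. x$i)"
    and "integrable (signed_mixture F c u z) (\<lambda>x. (x$i)\<^sup>2)"
    and "(\<integral>x. x$i \<partial>signed_mixture F c u z) = m$i"
    and "(\<integral>x. (x$i - m$i) * (x$j - m$j) \<partial>signed_mixture F c u z)
      = s2 * u$i * u$j + (\<Sum>k\<in>UNIV. z k$i * z k$j) / CARD('k)"
proof -
  note centred = integral_centred_quadratic[OF F int1 int2 mean second]
  have point: "(c + y *\<^sub>R u + v)$i = (m$i + v$i) + u$i * (y - a)" for y v i
    by (simp add: m_def algebra_simps)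
  have coord: "integrable F (\<lambda>y. (c + y *\<^sub>R u + v)$i)
      \<and> (\<integral>y. (c + y *\<^sub>R u + v)$i \<partial>F) = m$i + v$i" for v
  proof -
    have "(c + y *\<^sub>R u + v)$i = (m$i + v$i) + u$i * (y - a) + 0 * (y - a)\<^sup>2" for y
      unfolding point by simp
    from centred[OF this] show ?thesis by simp
  qed
  have square: "integrable F (\<lambda>y. ((c + y *\<^sub>R u + v)$i)\<^sup>2)" for v
  proof -
    have "((c + y *\<^sub>R u + v)$i)\<^sup>2
        = (m$i + v$i)\<^sup>2 + (2 * (m$i + v$i) * u$i) * (y - a) + (u$i)\<^sup>2 * (y - a)\<^sup>2" for y
      unfolding point by (simp add: power2_eq_square algebra_simps)
    from centred(1)[OF this] show ?thesis .
  qed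
  have cov: "integrable F (\<lambda>y. ((c + y *\<^sub>R u + v)$i - m$i) * ((c + y *\<^sub>R u + v)$j - m$j))
      \<and> (\<integral>y. ((c + y *\<^sub>R u + v)$i - m$i) * ((c + y *\<^sub>R u + v)$j - m$j) \<partial>F)
        = v$i * v$j + s2 * u$i * u$j" for v
  proof -
    have "((c + y *\<^sub>R u + v)$i - m$i) * ((c + y *\<^sub>R u + v)$j - m$j)
        = v$i * v$j + (v$i * u$j + v$j * u$i) * (y - a) + (u$i * u$j) * (y - a)\<^sup>2" for y
      unfolding point by (simp add: power2_eq_square algebra_simps)
    from centred[OF this] show ?thesis by (simp add: mult.assoc)
  qed
  have minus: "c + y *\<^sub>R u - v = c + y *\<^sub>R u + (- v)" for y v
    by simp
  show "integrable (signed_mixture F c u z) (\<lambda>x. x$i)"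
    by (rule integral_signed_mixture(1)[OF F sF], measurable) (simp_all only: minus coord)
  show "integrable (signed_mixture F c u z) (\<lambda>x. (x$i)\<^sup>2)"
    by (rule integral_signed_mixture(1)[OF F sF], measurable) (simp_all only: minus square)
  show "(\<integral>x. x$i \<partial>signed_mixture F c u z) = m$i"
    by (subst integral_signed_mixture(2)[OF F sF], measurable)
      (simp_all only: minus coord, simp)
  show "(\<integral>x. (x$i - m$i) * (x$j - m$j) \<partial>signed_mixture F c u z)
      = s2 * u$i * u$j + (\<Sum>k\<in>UNIV. z k$i * z k$j) / CARD('k)"
    by (subst integral_signed_mixture(2)[OF F sF], measurable)
      (simp_all only: minus cov, simp add: sum.distrib sum_distrib_left[symmetric] field_simps)
qed

lemma measure_signed_mixture:
  fixes z :: "'k::finite \<Rightarrow> real^'n"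
  assumes F: "prob_space F" and sF: "sets F = sets borel" and A: "A \<in> sets borel"
  shows "measure (signed_mixture F c u z) A =
    (\<Sum>k\<in>UNIV. measure F {y. c + y *\<^sub>R u + z k \<in> A} + measure F {y. c + y *\<^sub>R u - z k \<in> A})
      / (2 * CARD('k))"
proof -
  interpret prob_space F by fact
  note [measurable_cong] = sF
  have sp: "space F = UNIV" using sets_eq_imp_space_eq[OF sF] by simp
  have preimage: "integrable F (\<lambda>y. indicator A (g y) :: real)
      \<and> (\<integral>y. indicator A (g y) \<partial>F) = measure F {y. g y \<in> A}"
    if [measurable]: "g \<in> borel_measurable borel" for g :: "real \<Rightarrow> real^'n"
  proof
    show "integrable F (\<lambda>y. indicator A (g y) :: real)"
      by (rule integrable_const_bound[where B = 1]) (use A in auto)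
    have "(\<lambda>y. indicator A (g y) :: real) = indicator (g -` A)"
      by (simp add: indicator_vimage fun_eq_iff)
    then show "(\<integral>y. indicator A (g y) \<partial>F) = measure F {y. g y \<in> A}"
      by (simp add: sp vimage_def)
  qed
  have "measure (signed_mixture F c u z) A = integral\<^sup>L (signed_mixture F c u z) (indicator A)"
    using A by (simp add: sets_eq_imp_space_eq[OF sets_signed_mixture])
  also have "\<dots> = (\<Sum>k\<in>UNIV. measure F {y. c + y *\<^sub>R u + z k \<in> A}
      + measure F {y. c + y *\<^sub>R u - z k \<in> A}) / (2 * CARD('k))"
    using A by (subst integral_signed_mixture(2)[OF F sF]) (simp_all add: preimage)
  finally show ?thesis .
qed

lemma uminus_image_eq_vimage: "uminus ` B = uminus -` (B :: 'a::group_add set)"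
  by (force intro: image_eqI[where x = "- _"])

lemma sym_dist_vec_signed_mixture:
  fixes z :: "'k::finite \<Rightarrow> real^'n"
  assumes F: "prob_space F" and sF: "sets F = sets borel" and "sym_dist_real F"
  shows "sym_dist_vec (signed_mixture F c u z)"
proof -
  note [measurable_cong] = sF
  have sp: "space F = UNIV" using sets_eq_imp_space_eq[OF sF] by simp
  obtain b where "\<And>x. measure F {y. y - b > x} = measure F {y. y - b < - x}"
    using \<open>sym_dist_real F\<close> unfolding sym_dist_real_def by blast
  then have reflect: "distr F borel (\<lambda>y. 2 * b - y) = F"
    by (rule sym_dist_real_reflect[OF F sF])
  define e where "e = c + b *\<^sub>R u"
  have shifted: "measure (signed_mixture F c u z) {x. x - e \<in> B} =
      (\<Sum>k\<in>UNIV. measure F {y. (y - b) *\<^sub>R u + z k \<in> B} + measure F {y. (y - b) *\<^sub>R u - z k \<in> B})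
        / (2 * CARD('k))"
    if [measurable]: "B \<in> sets borel" for B
    by (subst measure_signed_mixture[OF F sF]) (simp_all add: e_def algebra_simps)
  have flip: "measure F {y. (y - b) *\<^sub>R u + v \<in> uminus ` B} = measure F {y. (y - b) *\<^sub>R u - v \<in> B}"
    if [measurable]: "B \<in> sets borel" for v and B :: "(real^'n) set"
  proof -
    have "measure F {y. (y - b) *\<^sub>R u + v \<in> uminus ` B}
        = measure (distr F borel (\<lambda>y. 2 * b - y)) {y. (y - b) *\<^sub>R u + v \<in> uminus ` B}"
      by (simp only: reflect)
    also have "\<dots> = measure F {y. (b - y) *\<^sub>R u + v \<in> uminus ` B}"
      by (subst measure_distr) (simp_all add: sp vimage_def uminus_image_eq_vimage)
    also have "{y. (b - y) *\<^sub>R u + v \<in> uminus ` B} = {y. (y - b) *\<^sub>R u - v \<in> B}"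
      by (simp add: uminus_image_eq_vimage algebra_simps)
    finally show ?thesis .
  qed
  show ?thesis unfolding sym_dist_vec_def
  proof (intro exI[of _ e] ballI)
    fix B :: "(real^'n) set" assume [measurable]: "B \<in> sets borel"
    have "{x::real^'n. - x \<in> B} \<in> sets borel" by measurable
    then have "uminus ` B \<in> sets borel"
      by (simp add: uminus_image_eq_vimage vimage_def)
    then show "measure (signed_mixture F c u z) {x. x - e \<in> B}
        = measure (signed_mixture F c u z) {x. x - e \<in> uminus ` B}"
      using flip[of B "z _"] flip[of B "- z _"] by (simp add: shifted add.commute)
  qed
qed

lemma distr_inner_signed_mixture:
  fixes z :: "'k::finite \<Rightarrow> real^'n"
  assumes F: "prob_space F" and sF: "sets F = sets borel"
    and "w \<bullet> c = 0" and "w \<bullet> u = 1" and "\<And>k. w \<bullet> z k = 0"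
  shows "distr (signed_mixture F c u z) borel (\<lambda>x. w \<bullet> x) = F"
proof -
  let ?\<phi> = "\<lambda>((k, s), y). c + y *\<^sub>R u + (if s then z k else - z k)"
  have "distr (signed_mixture F c u z) borel (\<lambda>x. w \<bullet> x)
      = distr (uniform_finite \<Otimes>\<^sub>M F) borel ((\<lambda>x. w \<bullet> x) \<circ> ?\<phi>)"
    unfolding signed_mixture_def
    by (rule distr_distr) (simp_all add: measurable_signed_mixture_point[OF sF])
  also have "\<dots> = distr (uniform_finite \<Otimes>\<^sub>M F :: (('k \<times> bool) \<times> real) measure) F snd"
    by (rule distr_cong) (use assms(3-5) in \<open>auto simp: sF inner_add_right\<close>)
  also have "\<dots> = F"
    by (rule distr_snd_pair_prob_space)
      (simp_all add: F prob_space_imp_sigma_finite prob_space_measure_pmf)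
  finally show ?thesis .
qed

lemma L_S_subset_L_wS:
  fixes mu w :: "real^'n" and S :: "real^'n^'n"
  assumes pd: "pos_def_mat S" and "w \<noteq> 0"
  shows "L_S (w \<bullet> mu) (sqrt (w \<bullet> (S *v w))) \<subseteq> L_wS w mu S"
proof
  fix F assume "F \<in> L_S (w \<bullet> mu) (sqrt (w \<bullet> (S *v w)))"
  define a where "a = w \<bullet> mu"
  define \<sigma>2 where "\<sigma>2 = w \<bullet> (S *v w)"
  have \<sigma>2: "\<sigma>2 > 0" using assms unfolding pos_def_mat_def \<sigma>2_def by auto
  have F: "prob_space F" and sF: "sets F = sets borel" and "sym_dist_real F"
    and int1: "integrable F (\<lambda>y. y)" and int2: "integrable F (\<lambda>y. y\<^sup>2)"
    and mean: "(\<integral>y. y \<partial>F) = a" and second: "(\<integral>y. y\<^sup>2 \<partial>F) = a\<^sup>2 + \<sigma>2"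
    using \<open>F \<in> L_S _ _\<close> less_imp_le[OF \<sigma>2] unfolding L_S_def a_def \<sigma>2_def by simp_all
  obtain v :: "'n \<Rightarrow> 'n \<Rightarrow> real"
    where v: "\<And>i j. schur_compl (\<lambda>i j. S$i$j) (($) w) i j = (\<Sum>k\<in>UNIV. v k i * v k j)"
      and v_orth: "\<And>k. (\<Sum>i\<in>UNIV. w$i * v k i) = 0"
    by (rule schur_compl_factor_orthogonal[OF sym_psd_pos_def_mat[OF pd], where y = "($) w"])
      (use \<sigma>2 in \<open>auto simp: quad_form_vec_nth \<sigma>2_def\<close>)
  have schur: "schur_compl (\<lambda>i j. S$i$j) (($) w) i j = S$i$j - (S *v w)$i * (S *v w)$j / \<sigma>2" for i j
    by (simp add: schur_compl_def mat_apply_vec_nth quad_form_vec_nth \<sigma>2_def)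
  define N where "N = real CARD('n)"
  define z where "z k = sqrt N *\<^sub>R (\<chi> i. v k i)" for k
  define u where "u = (1 / \<sigma>2) *\<^sub>R (S *v w)"
  define c where "c = mu - a *\<^sub>R u"
  define G where "G = signed_mixture F c u z"
  note moments = signed_mixture_moments[OF F sF int1 int2 mean second, of c u z]
  have "c + a *\<^sub>R u = mu" by (simp add: c_def)
  have cov: "\<sigma>2 * u$i * u$j + (\<Sum>k\<in>UNIV. z k$i * z k$j) / CARD('n) = S$i$j" for i j
  proof -
    have "(\<Sum>k\<in>UNIV. z k$i * z k$j) / CARD('n) = (\<Sum>k\<in>UNIV. v k i * v k j)"
      by (simp add: z_def N_def sum_distrib_left[symmetric] mult_ac)
    then show ?thesis
      using v[of i j] \<sigma>2 by (simp add: schur u_def power2_eq_square field_simps)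
  qed
  have "G \<in> M_S mu S"
    unfolding M_S_def G_def
    using prob_space_signed_mixture[OF F sF, of c u z]
      sym_dist_vec_signed_mixture[OF F sF \<open>sym_dist_real F\<close>, of c u z]
      moments \<open>c + a *\<^sub>R u = mu\<close> cov by simp
  moreover have "F = distr G borel (\<lambda>x. w \<bullet> x)"
  proof -
    have "w \<bullet> u = 1" using \<sigma>2 by (simp add: u_def \<sigma>2_def inner_commute)
    moreover have "w \<bullet> c = 0" using \<open>w \<bullet> u = 1\<close> by (simp add: c_def a_def inner_diff_right)
    moreover have "w \<bullet> z k = 0" for k
      using v_orth[of k]
      by (simp add: z_def inner_vec_sum mult.left_commute[of _ "sqrt N"] sum_distrib_left[symmetric])
    ultimately show ?thesis
      unfolding G_def by (simp add: distr_inner_signed_mixture[OF F sF])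
  qed
  ultimately show "F \<in> L_wS w mu S" unfolding L_wS_def by blast
qed

lemma SUP_M_S_integral_inner:
  fixes f :: "real \<Rightarrow> real"
  assumes [measurable]: "f \<in> borel_measurable borel"
  shows "(SUP G \<in> M_S mu S. \<integral>x. f (w \<bullet> x) \<partial>G) = (SUP F \<in> L_wS w mu S. \<integral>x. f x \<partial>F)"
proof -
  have "(SUP G \<in> M_S mu S. \<integral>x. f (w \<bullet> x) \<partial>G)
      = (SUP G \<in> M_S mu S. \<integral>x. f x \<partial>distr G borel (\<lambda>x. w \<bullet> x))"
  proof (rule SUP_cong[OF refl])
    fix G assume "G \<in> M_S mu S"
    then have [measurable_cong]: "sets G = sets borel" unfolding M_S_def by blast
    show "(\<integral>x. f (w \<bullet> x) \<partial>G) = (\<integral>x. f x \<partial>distr G borel (\<lambda>x. w \<bullet> x))"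
      by (subst integral_distr) simp_all
  qed
  also have "\<dots> = (SUP F \<in> L_wS w mu S. \<integral>x. f x \<partial>F)"
    unfolding L_wS_def by (simp add: image_image)
  finally show ?thesis .
qed

theorem lemma4:
  fixes mu w :: "real ^ 'n" and S :: "real ^ 'n ^ 'n" and t :: real
  assumes "pos_def_mat S" and "w \<noteq> 0"
  shows "L_wS w mu S = L_S (w \<bullet> mu) (sqrt (w \<bullet> (S *v w)))
    \<and> (SUP G \<in> M_S mu S. \<integral>x. (pos_part (w \<bullet> x - t)) ^ 2 \<partial>G)
      = (SUP F \<in> L_S (w \<bullet> mu) (sqrt (w \<bullet> (S *v w))). \<integral>x. (pos_part (x - t)) ^ 2 \<partial>F)"
proof -
  have "0 \<le> w \<bullet> (S *v w)"
    using assms unfolding pos_def_mat_def by (auto intro: less_imp_le)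
  then have L: "L_wS w mu S = L_S (w \<bullet> mu) (sqrt (w \<bullet> (S *v w)))"
    using L_S_subset_L_wS[OF assms] by (intro antisym L_wS_subset_L_S)
  have "(\<lambda>x. (pos_part (x - t))\<^sup>2) \<in> borel_measurable borel"
    unfolding pos_part_def by measurable
  from SUP_M_S_integral_inner[OF this, where mu = mu and S = S and w = w] show ?thesis
    unfolding L by simp
qed

end
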